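(* Let $Z\in\{0,1\}$, $S(1),S(0)\in\{0,1\}$ and a covariate vector $\mathbf{X}$ be random variables with $Z\perp\!\!\!\perp\{S(1),S(0),\mathbf{X}\}$ and observed $S=S(Z)$. Assume Monotonicity, $S(1)\ge S(0)$ almost surely. Then $\mathbf{X}\perp\!\!\!\perp U\mid\{Z=1,S=1,e_{1,u}(\mathbf{X})\}$ for $u=s\bar{s}$ and $u=ss$, and $\mathbf{X}\perp\!\!\!\perp U\mid\{Z=0,S=0,e_{0,u}(\mathbf{X})\}$ for $u=s\bar{s}$ and $u=\bar{s}\bar{s}$.
   Context: The principal stratum is $U=(S(1),S(0))$, whose values $(1,1),(1,0),(0,1),(0,0)$ are labelled $ss, s\bar{s}, \bar{s}s, \bar{s}\bar{s}$. Principal scores: $e_u(\mathbf{X}) = \Pr(U=u\mid \mathbf{X})$. Define $e_{1,s\bar{s}}(\mathbf{X}) = e_{s\bar{s}}(\mathbf{X})/\{e_{s\bar{s}}(\mathbf{X})+e_{ss}(\mathbf{X})\}$, $e_{1,ss}(\mathbf{X}) = e_{ss}(\mathbf{X})/\{e_{s\bar{s}}(\mathbf{X})+e_{ss}(\mathbf{X})\}$, $e_{0,s\bar{s}}(\mathbf{X}) = e_{s\bar{s}}(\mathbf{X})/\{e_{s\bar{s}}(\mathbf{X})+e_{\bar{s}\bar{s}}(\mathbf{X})\}$, $e_{0,\bar{s}\bar{s}}(\mathbf{X}) = e_{\bar{s}\bar{s}}(\mathbf{X})/\{e_{s\bar{s}}(\mathbf{X})+e_{\bar{s}\bar{s}}(\mathbf{X})\}$.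 Conditioning events and denominators are assumed positive. *)

theory Defs
  imports "HOL-Probability.Probability"
begin

text \<open>Principal strata: U = (S(1), S(0)) as a pair of booleans (True = 1).\<close>
abbreviation ss :: "bool \<times> bool" where "ss \<equiv> (True, True)"
abbreviation ssbar :: "bool \<times> bool" where "ssbar \<equiv> (True, False)"
abbreviation sbars :: "bool \<times> bool" where "sbars \<equiv> (False, True)"
abbreviation sbarsbar :: "bool \<times> bool" where "sbarsbar \<equiv> (False, False)"

definition e1 :: "(bool \<times> bool \<Rightarrow> 'x \<Rightarrow> real) \<Rightarrow> bool \<times> bool \<Rightarrow> 'x \<Rightarrow> real" where
  "e1 e u x = e u x / (e ssbar x + e ss x)"

definition e0 :: "(bool \<times> bool \<Rightarrow> 'x \<Rightarrow> real) \<Rightarrow> bool \<times> bool \<Rightarrow> 'x \<Rightarrow> real" where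
  "e0 e u x = e u x / (e ssbar x + e sbarsbar x)"

definition cond_indep ::
  "'a measure \<Rightarrow> 'a measure \<Rightarrow> ('a \<Rightarrow> 'b) \<Rightarrow> 'b measure \<Rightarrow> ('a \<Rightarrow> 'c) \<Rightarrow> 'c measure \<Rightarrow> bool" where
  "cond_indep P G X MX Y MY \<longleftrightarrow>
     (\<forall>A\<in>sets MX. \<forall>B\<in>sets MY. AE \<omega> in P.
        real_cond_exp P G (indicator ((X -` A \<inter> space P) \<inter> (Y -` B \<inter> space P))) \<omega> =
        real_cond_exp P G (indicator (X -` A \<inter> space P)) \<omega> *
        real_cond_exp P G (indicator (Y -` B \<inter> space P)) \<omega>)"

end

theory Submission
  imports Defs
begin

text \<open>The event \<open>{Z = z, S = s}\<close> is \<open>{Z = z} \<inter> {U \<in> {u\<^sub>1, u\<^sub>2}}\<close> for the two strata compatible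
  with it (ss and ss-bar when z = s = 1, ss-bar and s-bar s-bar when z = s = 0), whatever the joint
  law of the strata. Since Z is independent of
  (S(1), S(0), X), conditioning on this event rescales all moments of (U, X) on
  \<open>{U \<in> {u\<^sub>1, u\<^sub>2}}\<close> by a single constant, so on the conditioned space
  \<open>E[1{U = u\<^sub>1} | X] = e\<^sub>u\<^sub>1(X) / (e\<^sub>u\<^sub>1(X) + e\<^sub>u\<^sub>2(X))\<close>, a function of the normalised score.
  As U is two-valued there, every \<open>E[1{U \<in> C} | X]\<close> is such a function too, and by the tower
  property this is conditional independence of X and U given the normalised score.\<close>

lemma (in finite_measure) integral_uniform_measure:
  assumes "A \<in> sets M" "measure M A > 0" "f \<in> borel_measurable M"
  shows "(\<integral>x. f x \<partial>uniform_measure M A) = (\<integral>x. indicator A x * f x \<partial>M) / measure M A"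
proof -
  have "uniform_measure M A = density M (\<lambda>x. ennreal (indicator A x / measure M A))"
    unfolding uniform_measure_def
  proof (rule density_cong)
    show "AE x in M. indicator A x / emeasure M A = ennreal (indicator A x / measure M A)"
      using assms(2) divide_ennreal[of 1 "measure M A"]
      by (auto simp: emeasure_eq_measure indicator_def)
    show "(\<lambda>x. indicator A x / emeasure M A) \<in> borel_measurable M"
      using assms(1) by measurable
    show "(\<lambda>x. ennreal (indicator A x / measure M A)) \<in> borel_measurable M"
      using assms(1) by measurable
  qed
  then have "(\<integral>x. f x \<partial>uniform_measure M A) = (\<integral>x. (indicator A x / measure M A) *\<^sub>R f x \<partial>M)"
    using assms by (simp add: integral_density)
  then show ?thesis
    by (simp add: field_simps)
qed

lemma (in prob_space) indep_var_compose_of_indep_set_vimage_algebra: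
  fixes f :: "'z \<Rightarrow> real" and g :: "'w \<Rightarrow> real"
  assumes indep: "indep_set (sets (vimage_algebra (space M) Z MZ)) (sets (vimage_algebra (space M) W N))"
    and Z: "Z \<in> measurable M MZ" and W: "W \<in> measurable M N"
    and f: "f \<in> borel_measurable MZ" and g: "g \<in> borel_measurable N"
  shows "indep_var borel (\<lambda>\<omega>. f (Z \<omega>)) borel (\<lambda>\<omega>. g (W \<omega>))"
proof -
  have coarser: "sets (vimage_algebra (space M) (\<lambda>\<omega>. h (Y \<omega>)) borel) \<subseteq> sets (vimage_algebra (space M) Y MY)"
    if Y: "Y \<in> measurable M MY" and h: "h \<in> borel_measurable MY" for Y :: "'a \<Rightarrow> 'b" and MY and h :: "'b \<Rightarrow> real"
  proof (rule sets_image_in_sets)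
    show "(\<lambda>\<omega>. h (Y \<omega>)) \<in> borel_measurable (vimage_algebra (space M) Y MY)"
      using measurable_space[OF Y] by (intro measurable_compose[OF measurable_vimage_algebra1 h]) auto
  qed simp
  have "indep_set (sets (vimage_algebra (space M) (\<lambda>\<omega>. f (Z \<omega>)) borel))
      (sets (vimage_algebra (space M) (\<lambda>\<omega>. g (W \<omega>)) borel))"
    using indep coarser[OF Z f] coarser[OF W g] unfolding indep_sets2_eq by blast
  then show ?thesis
    using measurable_compose[OF Z f] measurable_compose[OF W g]
    unfolding indep_var_eq sets_vimage_algebra by blast
qed

lemma (in prob_space) integral_uniform_measure_indep_eq:
  fixes h1 h2 :: "'w \<Rightarrow> real"
  assumes indep: "indep_set (sets (vimage_algebra (space M) Z MZ)) (sets (vimage_algebra (space M) W N))"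
    and Z[measurable]: "Z \<in> measurable M MZ" and W[measurable]: "W \<in> measurable M N"
    and [measurable]: "Q \<in> sets MZ" "D \<in> sets N"
    and A_def: "A = {\<omega>\<in>space M. Z \<omega> \<in> Q \<and> W \<omega> \<in> D}" and A_pos: "measure M A > 0"
    and h1[measurable]: "h1 \<in> borel_measurable N" and h2[measurable]: "h2 \<in> borel_measurable N"
    and h1_bound: "\<And>w. \<bar>h1 w\<bar> \<le> c" and h2_bound: "\<And>w. \<bar>h2 w\<bar> \<le> c"
    and eq: "(\<integral>\<omega>. indicator D (W \<omega>) * h1 (W \<omega>) \<partial>M) = (\<integral>\<omega>. indicator D (W \<omega>) * h2 (W \<omega>) \<partial>M)"
  shows "(\<integral>\<omega>. h1 (W \<omega>) \<partial>uniform_measure M A) = (\<integral>\<omega>. h2 (W \<omega>) \<partial>uniform_measure M A)"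
proof -
  have "A \<in> sets M"
    unfolding A_def by measurable
  have conditioned: "(\<integral>\<omega>. h (W \<omega>) \<partial>uniform_measure M A)
      = (\<integral>\<omega>. indicator Q (Z \<omega>) \<partial>M) * (\<integral>\<omega>. indicator D (W \<omega>) * h (W \<omega>) \<partial>M) / measure M A"
    if [measurable]: "h \<in> borel_measurable N" and h_bound: "\<And>w. \<bar>h w\<bar> \<le> c" for h
  proof -
    have "indep_var borel (\<lambda>\<omega>. indicator Q (Z \<omega>)) borel (\<lambda>\<omega>. indicator D (W \<omega>) * h (W \<omega>))"
      by (rule indep_var_compose_of_indep_set_vimage_algebra[OF indep Z W]) measurable
    moreover have "integrable M (\<lambda>\<omega>. indicator Q (Z \<omega>) :: real)"
      by (rule integrable_const_bound[where B=1]) (auto simp: indicator_def)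
    moreover have "integrable M (\<lambda>\<omega>. indicator D (W \<omega>) * h (W \<omega>))"
      by (rule integrable_const_bound[where B=c])
         (use h_bound order_trans[OF abs_ge_zero h_bound] in \<open>auto simp: indicator_def\<close>)
    ultimately have "(\<integral>\<omega>. indicator Q (Z \<omega>) * (indicator D (W \<omega>) * h (W \<omega>)) \<partial>M)
        = (\<integral>\<omega>. indicator Q (Z \<omega>) \<partial>M) * (\<integral>\<omega>. indicator D (W \<omega>) * h (W \<omega>) \<partial>M)"
      by (rule indep_var_lebesgue_integral)
    moreover have "(\<integral>\<omega>. indicator A \<omega> * h (W \<omega>) \<partial>M)
        = (\<integral>\<omega>. indicator Q (Z \<omega>) * (indicator D (W \<omega>) * h (W \<omega>)) \<partial>M)"
      by (rule Bochner_Integration.integral_cong) (auto simp: A_def indicator_def)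
    ultimately show ?thesis
      using integral_uniform_measure[OF \<open>A \<in> sets M\<close> A_pos] by simp
  qed
  show ?thesis
    using conditioned[OF h1 h1_bound] conditioned[OF h2 h2_bound] eq by simp
qed

lemma (in sigma_finite_subalgebra) integral_mult_AE_eq_real_cond_exp:
  assumes fF: "f \<in> borel_measurable F" and gM: "g \<in> borel_measurable M" and hM: "h \<in> borel_measurable M"
    and fg: "integrable M (\<lambda>x. f x * g x)"
    and h: "AE x in M. h x = real_cond_exp M F g x"
  shows "integrable M (\<lambda>x. f x * h x)" "(\<integral>x. f x * h x \<partial>M) = (\<integral>x. f x * g x \<partial>M)"
proof -
  have fM: "f \<in> borel_measurable M"
    using measurable_from_subalg[OF subalg fF] .
  have eq: "AE x in M. f x * real_cond_exp M F g x = f x * h x"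
    using h by eventually_elim simp
  show "integrable M (\<lambda>x. f x * h x)"
    by (rule integrable_cong_AE_imp[OF real_cond_exp_intg(1)[OF fg fF gM] borel_measurable_times[OF fM hM] eq])
  have "(\<integral>x. f x * h x \<partial>M) = (\<integral>x. f x * real_cond_exp M F g x \<partial>M)"
    using eq by (intro integral_cong_AE) (auto intro: borel_measurable_times fM hM borel_measurable_cond_exp2)
  also have "\<dots> = (\<integral>x. f x * g x \<partial>M)"
    by (rule real_cond_exp_intg(2)[OF fg fF gM])
  finally show "(\<integral>x. f x * h x \<partial>M) = (\<integral>x. f x * g x \<partial>M)" .
qed

lemma (in finite_measure_subalgebra) real_cond_exp_indicator_two_valued:
  assumes Y[measurable]: "Y \<in> measurable M (count_space UNIV)"
    and two_valued: "AE \<omega> in M. Y \<omega> = u1 \<or> Y \<omega> = u2"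
    and t: "AE \<omega> in M. real_cond_exp M F (indicator {\<omega>\<in>space M. Y \<omega> = u1}) \<omega> = t \<omega>"
  shows "AE \<omega> in M. real_cond_exp M F (indicator (Y -` C \<inter> space M)) \<omega>
           = of_bool (u2 \<in> C) + (of_bool (u1 \<in> C) - of_bool (u2 \<in> C)) * t \<omega>"
proof -
  define a :: real where "a = of_bool (u2 \<in> C)"
  define b :: real where "b = of_bool (u1 \<in> C) - of_bool (u2 \<in> C)"
  let ?V = "indicator {\<omega>\<in>space M. Y \<omega> = u1} :: 'a \<Rightarrow> real"
  have [measurable]: "Y -` C \<inter> space M \<in> sets M"
    using measurable_sets[OF Y] by simp
  have iV: "integrable M ?V"
    by (rule integrable_const_bound[where B=1]) (auto simp: indicator_def)
  have ia: "integrable M (\<lambda>_. a)"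
    by (rule integrable_const_bound[where B="\<bar>a\<bar>"]) auto
  have "AE \<omega> in M. indicator (Y -` C \<inter> space M) \<omega> = a + b * ?V \<omega>"
    using two_valued AE_space by eventually_elim (auto simp: a_def b_def indicator_def)
  then have "AE \<omega> in M. real_cond_exp M F (indicator (Y -` C \<inter> space M)) \<omega>
      = real_cond_exp M F (\<lambda>\<omega>. a + b * ?V \<omega>) \<omega>"
    by (rule real_cond_exp_cong) measurable
  moreover have "AE \<omega> in M. real_cond_exp M F (\<lambda>\<omega>. a + b * ?V \<omega>) \<omega>
      = real_cond_exp M F (\<lambda>_. a) \<omega> + real_cond_exp M F (\<lambda>\<omega>. b * ?V \<omega>) \<omega>"
    using ia iV by (intro real_cond_exp_add) auto
  moreover have "AE \<omega> in M. real_cond_exp M F (\<lambda>_. a) \<omega> = a"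
    using ia by (rule real_cond_exp_F_meas) simp
  moreover have "AE \<omega> in M. real_cond_exp M F (\<lambda>\<omega>. b * ?V \<omega>) \<omega> = b * real_cond_exp M F ?V \<omega>"
    using iV by (rule real_cond_exp_cmult)
  ultimately show ?thesis
    using t unfolding a_def b_def by eventually_elim simp
qed

lemma integrable_mult_bounded:
  fixes f h :: "'a \<Rightarrow> real"
  assumes h: "integrable M h" and f: "f \<in> borel_measurable M" and f_bound: "\<And>x. \<bar>f x\<bar> \<le> c"
  shows "integrable M (\<lambda>x. f x * h x)"
proof (rule Bochner_Integration.integrable_bound[OF integrable_mult_right[OF h, of c]])
  have c0: "0 \<le> c"
    using order_trans[OF abs_ge_zero f_bound] .
  show "(\<lambda>x. f x * h x) \<in> borel_measurable M"
    using f borel_measurable_integrable[OF h] by (rule borel_measurable_times)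
  show "AE x in M. norm (f x * h x) \<le> norm (c * h x)"
    by (rule AE_I2) (simp add: abs_mult abs_of_nonneg[OF c0] f_bound mult_right_mono)
qed

lemma (in prob_space) real_cond_exp_nested_eq_measurable:
  assumes subH: "subalgebra M H" and subG: "subalgebra H G"
    and g: "integrable M g"
    and tG: "t \<in> borel_measurable G" and t: "AE \<omega> in M. real_cond_exp M H g \<omega> = t \<omega>"
  shows "AE \<omega> in M. real_cond_exp M G g \<omega> = t \<omega>"
proof -
  have subG': "subalgebra M G"
    using subH subG by (auto simp: subalgebra_def)
  interpret H: finite_measure_subalgebra M H by unfold_locales (fact subH)
  interpret G: finite_measure_subalgebra M G by unfold_locales (fact subG')
  have tM: "t \<in> borel_measurable M"
    using measurable_from_subalg[OF subG' tG] .
  have "AE \<omega> in M. real_cond_exp M G (real_cond_exp M H g) \<omega> = real_cond_exp M G g \<omega>"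
    by (rule G.real_cond_exp_nested_subalg[OF subH subG g])
  moreover have "AE \<omega> in M. real_cond_exp M G (real_cond_exp M H g) \<omega> = real_cond_exp M G t \<omega>"
    by (rule G.real_cond_exp_cong[OF t borel_measurable_cond_exp2 tM])
  moreover have "AE \<omega> in M. real_cond_exp M G t \<omega> = t \<omega>"
    by (rule G.real_cond_exp_F_meas[OF integrable_cong_AE_imp[OF H.real_cond_exp_int(1)[OF g] tM t] tG])
  ultimately show ?thesis
    by eventually_elim simp
qed

lemma (in prob_space) real_cond_exp_nested_mult:
  assumes subH: "subalgebra M H" and subG: "subalgebra H G"
    and fH: "f \<in> borel_measurable H" and f_bound: "\<And>x. \<bar>f x\<bar> \<le> c"
    and g: "integrable M g"
    and tG: "t \<in> borel_measurable G" and t: "AE \<omega> in M. real_cond_exp M H g \<omega> = t \<omega>"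
  shows "AE \<omega> in M. real_cond_exp M G (\<lambda>\<omega>. f \<omega> * g \<omega>) \<omega> = real_cond_exp M G f \<omega> * t \<omega>"
proof -
  have subG': "subalgebra M G"
    using subH subG by (auto simp: subalgebra_def)
  interpret H: finite_measure_subalgebra M H by unfold_locales (fact subH)
  interpret G: finite_measure_subalgebra M G by unfold_locales (fact subG')
  have fM: "f \<in> borel_measurable M" and tM: "t \<in> borel_measurable M"
    using measurable_from_subalg[OF subH fH] measurable_from_subalg[OF subG' tG] .
  have fg: "integrable M (\<lambda>\<omega>. f \<omega> * g \<omega>)"
    using g fM f_bound by (rule integrable_mult_bounded)
  have ft: "integrable M (\<lambda>\<omega>. f \<omega> * t \<omega>)"
    using integrable_cong_AE_imp[OF H.real_cond_exp_int(1)[OF g] tM t] fM f_bound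
    by (rule integrable_mult_bounded)
  have "AE \<omega> in M. real_cond_exp M H (\<lambda>\<omega>. f \<omega> * g \<omega>) \<omega> = f \<omega> * real_cond_exp M H g \<omega>"
    by (rule H.real_cond_exp_mult[OF fH borel_measurable_integrable[OF g] fg])
  then have "AE \<omega> in M. real_cond_exp M H (\<lambda>\<omega>. f \<omega> * g \<omega>) \<omega> = f \<omega> * t \<omega>"
    using t by eventually_elim simp
  then have "AE \<omega> in M. real_cond_exp M G (real_cond_exp M H (\<lambda>\<omega>. f \<omega> * g \<omega>)) \<omega>
      = real_cond_exp M G (\<lambda>\<omega>. f \<omega> * t \<omega>) \<omega>"
    by (rule G.real_cond_exp_cong[OF _ borel_measurable_cond_exp2 borel_measurable_times[OF fM tM]])
  moreover have "AE \<omega> in M. real_cond_exp M G (real_cond_exp M H (\<lambda>\<omega>. f \<omega> * g \<omega>)) \<omega>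
      = real_cond_exp M G (\<lambda>\<omega>. f \<omega> * g \<omega>) \<omega>"
    by (rule G.real_cond_exp_nested_subalg[OF subH subG fg])
  moreover have "AE \<omega> in M. real_cond_exp M G (\<lambda>\<omega>. t \<omega> * f \<omega>) \<omega> = t \<omega> * real_cond_exp M G f \<omega>"
    by (rule G.real_cond_exp_mult[OF tG fM]) (use ft in \<open>simp add: mult.commute\<close>)
  ultimately show ?thesis
    by eventually_elim (simp add: mult.commute)
qed

text \<open>Tower property through \<open>H\<close>: with \<open>t = E[1{Y \<in> C} | H]\<close> measurable for \<open>G\<close>,
  \<open>E[1{X \<in> B} 1{Y \<in> C} | G] = E[1{X \<in> B} t | G] = E[1{X \<in> B} | G] t\<close> and \<open>E[1{Y \<in> C} | G] = t\<close>.\<close>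

lemma (in prob_space) cond_indep_if_real_cond_exp_measurable:
  assumes subH: "subalgebra M H" and subG: "subalgebra H G"
    and X: "X \<in> measurable H MX" and Y: "Y \<in> measurable M MY"
    and ce: "\<And>C. C \<in> sets MY \<Longrightarrow>
      \<exists>t\<in>borel_measurable G. AE \<omega> in M. real_cond_exp M H (indicator (Y -` C \<inter> space M)) \<omega> = t \<omega>"
  shows "cond_indep M G X MX Y MY"
  unfolding cond_indep_def
proof (intro ballI)
  fix B C assume B: "B \<in> sets MX" and C: "C \<in> sets MY"
  define IB :: "'a \<Rightarrow> real" where "IB = indicator (X -` B \<inter> space M)"
  define IC :: "'a \<Rightarrow> real" where "IC = indicator (Y -` C \<inter> space M)"
  obtain t where tG: "t \<in> borel_measurable G" and t: "AE \<omega> in M. real_cond_exp M H IC \<omega> = t \<omega>"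
    using ce[OF C] unfolding IC_def by blast
  have IBH: "IB \<in> borel_measurable H"
    unfolding IB_def using measurable_sets[OF X B] subH
    by (intro borel_measurable_indicator) (simp add: subalgebra_def)
  have IB_bound: "\<bar>IB \<omega>\<bar> \<le> 1" for \<omega>
    by (simp add: IB_def)
  have iIC: "integrable M IC"
    unfolding IC_def using measurable_sets[OF Y C] emeasure_finite
    by (intro integrable_real_indicator) (simp_all add: less_top[symmetric])
  note tower = real_cond_exp_nested_eq_measurable[OF subH subG iIC tG t]
    real_cond_exp_nested_mult[OF subH subG IBH IB_bound iIC tG t]
  have prod: "indicator ((X -` B \<inter> space M) \<inter> (Y -` C \<inter> space M)) = (\<lambda>\<omega>. IB \<omega> * IC \<omega>)"
    by (auto simp: IB_def IC_def indicator_def)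
  show "AE \<omega> in M. real_cond_exp M G (indicator ((X -` B \<inter> space M) \<inter> (Y -` C \<inter> space M))) \<omega>
      = real_cond_exp M G (indicator (X -` B \<inter> space M)) \<omega> * real_cond_exp M G (indicator (Y -` C \<inter> space M)) \<omega>"
    unfolding prod IB_def[symmetric] IC_def[symmetric] using tower by eventually_elim simp
qed

lemma (in prob_space) cond_indep_two_valued:
  assumes X: "X \<in> measurable M MX" and \<phi>: "\<phi> \<in> borel_measurable MX" and \<psi>: "\<psi> \<in> borel_measurable borel"
    and U: "U \<in> measurable M (count_space UNIV)"
    and two_valued: "AE \<omega> in M. U \<omega> = u1 \<or> U \<omega> = u2"
    and ce: "AE \<omega> in M. real_cond_exp M (vimage_algebra (space M) X MX)
      (indicator {\<omega>\<in>space M. U \<omega> = u1}) \<omega> = \<psi> (\<phi> (X \<omega>))"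
  shows "cond_indep M (vimage_algebra (space M) (\<lambda>\<omega>. \<phi> (X \<omega>)) borel) X MX U (count_space UNIV)"
proof -
  let ?H = "vimage_algebra (space M) X MX"
  let ?G = "vimage_algebra (space M) (\<lambda>\<omega>. \<phi> (X \<omega>)) borel"
  have subH: "subalgebra M ?H"
    unfolding subalgebra_def using sets_image_in_sets[OF refl X] by auto
  interpret H: finite_measure_subalgebra M ?H by unfold_locales (fact subH)
  have XH: "X \<in> measurable ?H MX"
    using measurable_space[OF X] by (intro measurable_vimage_algebra1) auto
  have subG: "subalgebra ?H ?G"
    unfolding subalgebra_def using sets_image_in_sets[OF _ measurable_compose[OF XH \<phi>]] by auto
  have \<psi>\<phi>X: "(\<lambda>\<omega>. \<psi> (\<phi> (X \<omega>))) \<in> borel_measurable ?G"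
    by (rule measurable_compose[OF measurable_vimage_algebra1 \<psi>]) simp
  have "\<exists>t\<in>borel_measurable ?G.
      AE \<omega> in M. real_cond_exp M ?H (indicator (U -` C \<inter> space M)) \<omega> = t \<omega>" for C
  proof
    show "(\<lambda>\<omega>. of_bool (u2 \<in> C) + (of_bool (u1 \<in> C) - of_bool (u2 \<in> C)) * \<psi> (\<phi> (X \<omega>)))
        \<in> borel_measurable ?G"
      using \<psi>\<phi>X by measurable
    show "AE \<omega> in M. real_cond_exp M ?H (indicator (U -` C \<inter> space M)) \<omega>
        = of_bool (u2 \<in> C) + (of_bool (u1 \<in> C) - of_bool (u2 \<in> C)) * \<psi> (\<phi> (X \<omega>))"
      by (rule H.real_cond_exp_indicator_two_valued[OF U two_valued ce])
  qed
  then show ?thesis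
    by (rule cond_indep_if_real_cond_exp_measurable[OF subH subG XH U])
qed

lemma (in prob_space) integral_stratum_eq_score_weighted:
  fixes U :: "'a \<Rightarrow> 'u" and X :: "'a \<Rightarrow> 'x" and e :: "'u \<Rightarrow> 'x \<Rightarrow> real"
  assumes X[measurable]: "X \<in> measurable M MX" and U[measurable]: "U \<in> measurable M (count_space UNIV)"
    and [measurable]: "\<And>u. e u \<in> borel_measurable MX"
    and g[measurable]: "g \<in> borel_measurable MX" and [measurable]: "\<tau> \<in> borel_measurable MX"
    and score: "\<And>u. AE \<omega> in M. e u (X \<omega>) =
      real_cond_exp M (vimage_algebra (space M) X MX) (indicator {\<omega>\<in>space M. U \<omega> = u}) \<omega>"
    and g_bound: "\<And>x. \<bar>g x\<bar> \<le> c" and \<tau>_bound: "\<And>x. \<bar>\<tau> x\<bar> \<le> 1"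
    and ratio: "AE \<omega> in M. \<tau> (X \<omega>) * (e u1 (X \<omega>) + e u2 (X \<omega>)) = e u1 (X \<omega>)"
    and "u1 \<noteq> u2"
  shows "(\<integral>\<omega>. g (X \<omega>) * indicator {\<omega>\<in>space M. U \<omega> = u1} \<omega> \<partial>M)
       = (\<integral>\<omega>. g (X \<omega>) * \<tau> (X \<omega>) * indicator {\<omega>\<in>space M. U \<omega> \<in> {u1, u2}} \<omega> \<partial>M)"
proof -
  let ?H = "vimage_algebra (space M) X MX"
  let ?V = "\<lambda>u. indicator {\<omega>\<in>space M. U \<omega> = u} :: 'a \<Rightarrow> real"
  have subH: "subalgebra M ?H"
    unfolding subalgebra_def using sets_image_in_sets[OF refl X] by auto
  interpret H: finite_measure_subalgebra M ?H by unfold_locales (fact subH)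
  have XH: "X \<in> measurable ?H MX"
    using measurable_space[OF X] by (intro measurable_vimage_algebra1) auto
  have weighted_score: "integrable M (\<lambda>\<omega>. k (X \<omega>) * ?V u \<omega>)
      \<and> integrable M (\<lambda>\<omega>. k (X \<omega>) * e u (X \<omega>))
      \<and> (\<integral>\<omega>. k (X \<omega>) * e u (X \<omega>) \<partial>M) = (\<integral>\<omega>. k (X \<omega>) * ?V u \<omega> \<partial>M)"
    if k[measurable]: "k \<in> borel_measurable MX" and k_bound: "\<And>x. \<bar>k x\<bar> \<le> c" for k u
  proof -
    have kH: "(\<lambda>\<omega>. k (X \<omega>)) \<in> borel_measurable ?H"
      using measurable_compose[OF XH k] .
    have "integrable M (\<lambda>\<omega>. k (X \<omega>) * ?V u \<omega>)"
    proof (rule integrable_const_bound[where B=c])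
      show "AE \<omega> in M. norm (k (X \<omega>) * ?V u \<omega>) \<le> c"
        using k_bound order_trans[OF abs_ge_zero k_bound] by (auto simp: indicator_def)
    qed measurable
    moreover have "(\<lambda>\<omega>. e u (X \<omega>)) \<in> borel_measurable M" "?V u \<in> borel_measurable M"
      by measurable
    ultimately show ?thesis
      using H.integral_mult_AE_eq_real_cond_exp[OF kH _ _ _ score[of u]] by blast
  qed
  have c0: "0 \<le> c"
    using order_trans[OF abs_ge_zero g_bound] .
  have g\<tau>_bound: "\<bar>g x * \<tau> x\<bar> \<le> c" for x
    using mult_mono[OF g_bound \<tau>_bound c0 abs_ge_zero] by (simp add: abs_mult)
  have g\<tau>: "(\<lambda>x. g x * \<tau> x) \<in> borel_measurable MX"
    by measurable
  note g_score = weighted_score[OF g g_bound]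
  note g\<tau>_score = weighted_score[OF g\<tau> g\<tau>_bound]
  have "(\<integral>\<omega>. g (X \<omega>) * \<tau> (X \<omega>) * indicator {\<omega>\<in>space M. U \<omega> \<in> {u1, u2}} \<omega> \<partial>M)
      = (\<integral>\<omega>. g (X \<omega>) * \<tau> (X \<omega>) * ?V u1 \<omega> + g (X \<omega>) * \<tau> (X \<omega>) * ?V u2 \<omega> \<partial>M)"
    using \<open>u1 \<noteq> u2\<close> by (intro Bochner_Integration.integral_cong) (auto simp: indicator_def)
  also have "\<dots> = (\<integral>\<omega>. g (X \<omega>) * \<tau> (X \<omega>) * e u1 (X \<omega>) + g (X \<omega>) * \<tau> (X \<omega>) * e u2 (X \<omega>) \<partial>M)"
    using g\<tau>_score[of u1] g\<tau>_score[of u2] by simp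
  also have "\<dots> = (\<integral>\<omega>. g (X \<omega>) * e u1 (X \<omega>) \<partial>M)"
  proof (rule integral_cong_AE)
    show "AE \<omega> in M. g (X \<omega>) * \<tau> (X \<omega>) * e u1 (X \<omega>) + g (X \<omega>) * \<tau> (X \<omega>) * e u2 (X \<omega>)
        = g (X \<omega>) * e u1 (X \<omega>)"
      using ratio by eventually_elim (metis distrib_left mult.assoc)
  qed measurable
  also have "\<dots> = (\<integral>\<omega>. g (X \<omega>) * ?V u1 \<omega> \<partial>M)"
    using g_score[of u1] by simp
  finally show ?thesis ..
qed

lemma clamped_ratio_mult_eq:
  fixes a b :: real
  assumes "a + b > 0" "a \<ge> 0" "b \<ge> 0"
  shows "max 0 (min 1 (a / (a + b))) * (a + b) = a"
    and "max 0 (min 1 (1 - b / (a + b))) * (a + b) = a"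
proof -
  have "0 \<le> a / (a + b)" "a / (a + b) \<le> 1" "1 - b / (a + b) = a / (a + b)"
    using assms by (simp_all add: divide_le_eq_1 field_simps)
  then show "max 0 (min 1 (a / (a + b))) * (a + b) = a"
    and "max 0 (min 1 (1 - b / (a + b))) * (a + b) = a"
    using assms by auto
qed

locale principal_strata = prob_space M for M :: "'a measure" +
  fixes Z :: "'a \<Rightarrow> 'z" and S1 S0 :: "'a \<Rightarrow> bool" and X :: "'a \<Rightarrow> 'x" and MX :: "'x measure"
    and e :: "bool \<times> bool \<Rightarrow> 'x \<Rightarrow> real"
  assumes Z_measurable[measurable]: "Z \<in> measurable M (count_space UNIV)"
    and S1_measurable[measurable]: "S1 \<in> measurable M (count_space UNIV)"
    and S0_measurable[measurable]: "S0 \<in> measurable M (count_space UNIV)"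
    and X_measurable[measurable]: "X \<in> measurable M MX"
    and indep_treatment: "indep_set (sets (vimage_algebra (space M) Z (count_space UNIV)))
      (sets (vimage_algebra (space M) (\<lambda>\<omega>. (S1 \<omega>, S0 \<omega>, X \<omega>))
        (count_space UNIV \<Otimes>\<^sub>M count_space UNIV \<Otimes>\<^sub>M MX)))"
    and score_measurable[measurable]: "\<And>u. e u \<in> borel_measurable MX"
    and score: "\<And>u. AE \<omega> in M. e u (X \<omega>) = real_cond_exp M (vimage_algebra (space M) X MX)
      (indicator {\<omega>\<in>space M. (S1 \<omega>, S0 \<omega>) = u}) \<omega>"
begin

lemma stratum_measurable[measurable]: "(\<lambda>\<omega>. (S1 \<omega>, S0 \<omega>)) \<in> measurable M (count_space UNIV)"
  by measurable

lemma sets_selected_event: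
  "{\<omega>\<in>space M. Z \<omega> \<in> Q \<and> (S1 \<omega>, S0 \<omega>) \<in> R} \<in> sets M"
proof -
  have "{\<omega>\<in>space M. Z \<omega> \<in> Q \<and> (S1 \<omega>, S0 \<omega>) \<in> R}
      = (Z -` Q \<inter> space M) \<inter> ((\<lambda>\<omega>. (S1 \<omega>, S0 \<omega>)) -` R \<inter> space M)"
    by auto
  then show ?thesis
    using measurable_sets[OF Z_measurable, of Q] measurable_sets[OF stratum_measurable, of R] by auto
qed

lemma integral_stratum_uniform_measure:
  assumes \<tau>[measurable]: "\<tau> \<in> borel_measurable MX" and \<tau>_bound: "\<And>x. \<bar>\<tau> x\<bar> \<le> 1"
    and ratio: "AE \<omega> in M. \<tau> (X \<omega>) * (e u1 (X \<omega>) + e u2 (X \<omega>)) = e u1 (X \<omega>)"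
    and "u1 \<noteq> u2"
    and A_def: "A = {\<omega>\<in>space M. Z \<omega> \<in> Q \<and> (S1 \<omega>, S0 \<omega>) \<in> {u1, u2}}" and A_pos: "measure M A > 0"
    and B[measurable]: "B \<in> sets MX"
  shows "(\<integral>\<omega>. indicator B (X \<omega>) * indicator {\<omega>\<in>space M. (S1 \<omega>, S0 \<omega>) = u1} \<omega> \<partial>uniform_measure M A)
       = (\<integral>\<omega>. indicator B (X \<omega>) * \<tau> (X \<omega>) \<partial>uniform_measure M A)"
proof -
  let ?P = "uniform_measure M A"
  let ?N = "count_space (UNIV :: bool set) \<Otimes>\<^sub>M count_space (UNIV :: bool set) \<Otimes>\<^sub>M MX"
  define W where "W = (\<lambda>\<omega>. (S1 \<omega>, S0 \<omega>, X \<omega>))"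
  define D where "D = {w \<in> space ?N. (fst w, fst (snd w)) \<in> {u1, u2}}"
  define h1 :: "bool \<times> bool \<times> 'x \<Rightarrow> real"
    where "h1 w = indicator B (snd (snd w)) * of_bool ((fst w, fst (snd w)) = u1)" for w
  define h2 :: "bool \<times> bool \<times> 'x \<Rightarrow> real"
    where "h2 w = indicator B (snd (snd w)) * \<tau> (snd (snd w))" for w
  have W[measurable]: "W \<in> measurable M ?N" and [measurable]: "D \<in> sets ?N"
    and h1[measurable]: "h1 \<in> borel_measurable ?N" and h2[measurable]: "h2 \<in> borel_measurable ?N"
    unfolding W_def D_def h1_def h2_def by measurable
  have h1_bound: "\<bar>h1 w\<bar> \<le> 1" and h2_bound: "\<bar>h2 w\<bar> \<le> 1" for w
    using \<tau>_bound[of "snd (snd w)"] by (auto simp: h1_def h2_def indicator_def)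
  have A_W: "A = {\<omega>\<in>space M. Z \<omega> \<in> Q \<and> W \<omega> \<in> D}"
    using measurable_space[OF W] by (auto simp: A_def D_def W_def)
  have "(\<integral>\<omega>. indicator D (W \<omega>) * h1 (W \<omega>) \<partial>M)
      = (\<integral>\<omega>. indicator B (X \<omega>) * indicator {\<omega>\<in>space M. (S1 \<omega>, S0 \<omega>) = u1} \<omega> \<partial>M)"
    using measurable_space[OF W]
    by (intro Bochner_Integration.integral_cong) (auto simp: D_def W_def h1_def indicator_def)
  also have "\<dots> = (\<integral>\<omega>. indicator B (X \<omega>) * \<tau> (X \<omega>)
      * indicator {\<omega>\<in>space M. (S1 \<omega>, S0 \<omega>) \<in> {u1, u2}} \<omega> \<partial>M)"
    by (rule integral_stratum_eq_score_weighted[OF X_measurable _ _ _ _ score _ \<tau>_bound ratio \<open>u1 \<noteq> u2\<close>])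
       (auto simp: indicator_def)
  also have "\<dots> = (\<integral>\<omega>. indicator D (W \<omega>) * h2 (W \<omega>) \<partial>M)"
    using measurable_space[OF W]
    by (intro Bochner_Integration.integral_cong) (auto simp: D_def W_def h2_def indicator_def)
  finally have "(\<integral>\<omega>. h1 (W \<omega>) \<partial>?P) = (\<integral>\<omega>. h2 (W \<omega>) \<partial>?P)"
    using indep_treatment unfolding W_def[symmetric]
    by (intro integral_uniform_measure_indep_eq[OF _ Z_measurable W _ _ A_W A_pos h1 h2 h1_bound h2_bound])
       simp_all
  moreover have "(\<integral>\<omega>. indicator B (X \<omega>) * indicator {\<omega>\<in>space M. (S1 \<omega>, S0 \<omega>) = u1} \<omega> \<partial>?P)
      = (\<integral>\<omega>. h1 (W \<omega>) \<partial>?P)"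
    by (rule Bochner_Integration.integral_cong) (auto simp: W_def h1_def indicator_def)
  moreover have "(\<integral>\<omega>. indicator B (X \<omega>) * \<tau> (X \<omega>) \<partial>?P) = (\<integral>\<omega>. h2 (W \<omega>) \<partial>?P)"
    by (rule Bochner_Integration.integral_cong) (auto simp: W_def h2_def)
  ultimately show ?thesis
    by simp
qed

lemma real_cond_exp_stratum_uniform_measure:
  assumes \<tau>[measurable]: "\<tau> \<in> borel_measurable MX" and \<tau>_bound: "\<And>x. \<bar>\<tau> x\<bar> \<le> 1"
    and ratio: "AE \<omega> in M. \<tau> (X \<omega>) * (e u1 (X \<omega>) + e u2 (X \<omega>)) = e u1 (X \<omega>)"
    and "u1 \<noteq> u2"
    and A_def: "A = {\<omega>\<in>space M. Z \<omega> \<in> Q \<and> (S1 \<omega>, S0 \<omega>) \<in> {u1, u2}}" and A_pos: "measure M A > 0"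
  shows "AE \<omega> in uniform_measure M A. real_cond_exp (uniform_measure M A) (vimage_algebra (space M) X MX)
           (indicator {\<omega>\<in>space M. (S1 \<omega>, S0 \<omega>) = u1}) \<omega> = \<tau> (X \<omega>)"
proof -
  let ?P = "uniform_measure M A"
  let ?H = "vimage_algebra (space M) X MX"
  let ?V = "indicator {\<omega>\<in>space M. (S1 \<omega>, S0 \<omega>) = u1} :: 'a \<Rightarrow> real"
  have A: "A \<in> sets M"
    unfolding A_def by (rule sets_selected_event)
  interpret P: prob_space ?P
    using A A_pos by (intro prob_space_uniform_measure) (auto simp: emeasure_eq_measure)
  have subH: "subalgebra ?P ?H"
    unfolding subalgebra_def using sets_image_in_sets[OF refl X_measurable] by auto
  interpret PH: finite_measure_subalgebra ?P ?H by unfold_locales (fact subH)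
  show ?thesis
  proof (rule PH.real_cond_exp_charact)
    fix E assume "E \<in> sets ?H"
    then obtain B where B: "B \<in> sets MX" and E: "E = X -` B \<inter> space M"
      using measurable_space[OF X_measurable] by (auto simp: sets_vimage_algebra2)
    have "(\<integral>\<omega>\<in>E. ?V \<omega> \<partial>?P) = (\<integral>\<omega>. indicator B (X \<omega>) * ?V \<omega> \<partial>?P)"
      unfolding set_lebesgue_integral_def E
      by (rule Bochner_Integration.integral_cong) (auto simp: indicator_def)
    also have "\<dots> = (\<integral>\<omega>. indicator B (X \<omega>) * \<tau> (X \<omega>) \<partial>?P)"
      by (rule integral_stratum_uniform_measure[OF \<tau> \<tau>_bound ratio \<open>u1 \<noteq> u2\<close> A_def A_pos B])
    also have "\<dots> = (\<integral>\<omega>\<in>E. \<tau> (X \<omega>) \<partial>?P)"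
      unfolding set_lebesgue_integral_def E
      by (rule Bochner_Integration.integral_cong) (auto simp: indicator_def)
    finally show "(\<integral>\<omega>\<in>E. ?V \<omega> \<partial>?P) = (\<integral>\<omega>\<in>E. \<tau> (X \<omega>) \<partial>?P)" .
  next
    show "integrable ?P ?V"
      by (rule P.integrable_const_bound[where B=1]) (auto simp: indicator_def)
    show "integrable ?P (\<lambda>\<omega>. \<tau> (X \<omega>))"
      by (rule P.integrable_const_bound[where B=1]) (use \<tau>_bound in auto)
    show "(\<lambda>\<omega>. \<tau> (X \<omega>)) \<in> borel_measurable ?H"
      using measurable_space[OF X_measurable]
      by (intro measurable_compose[OF measurable_vimage_algebra1 \<tau>]) auto
  qed
qed

lemma score_nonneg: "AE \<omega> in M. 0 \<le> e u (X \<omega>)"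
proof -
  interpret H: finite_measure_subalgebra M "vimage_algebra (space M) X MX"
    by unfold_locales (simp add: subalgebra_def sets_image_in_sets[OF refl X_measurable])
  have "AE \<omega> in M. 0 \<le> real_cond_exp M (vimage_algebra (space M) X MX)
      (indicator {\<omega>\<in>space M. (S1 \<omega>, S0 \<omega>) = u}) \<omega>"
    by (rule H.real_cond_exp_pos) auto
  with score[of u] show ?thesis
    by eventually_elim simp
qed

text \<open>The clamp \<open>\<psi>\<close> makes \<open>\<tau> = \<psi> \<circ> \<phi>\<close> bounded everywhere; wherever the two scores are
  non-negative with positive sum, \<open>\<tau> = e\<^sub>u\<^sub>1 / (e\<^sub>u\<^sub>1 + e\<^sub>u\<^sub>2)\<close> whichever of \<open>u\<^sub>1, u\<^sub>2\<close> is \<open>u\<close>.\<close>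

lemma cond_indep_normalized_principal_score:
  assumes A_def: "A = {\<omega>\<in>space M. Z \<omega> \<in> Q \<and> (S1 \<omega>, S0 \<omega>) \<in> {u1, u2}}" and A_pos: "measure M A > 0"
    and pos: "AE \<omega> in M. e u1 (X \<omega>) + e u2 (X \<omega>) > 0"
    and u: "u \<in> {u1, u2}" and u12: "u1 \<noteq> u2"
  shows "cond_indep (uniform_measure M A)
    (vimage_algebra (space M) (\<lambda>\<omega>. e u (X \<omega>) / (e u1 (X \<omega>) + e u2 (X \<omega>))) borel)
    X MX (\<lambda>\<omega>. (S1 \<omega>, S0 \<omega>)) (count_space UNIV)"
proof -
  let ?P = "uniform_measure M A"
  define \<phi> where "\<phi> x = e u x / (e u1 x + e u2 x)" for x
  define \<psi> :: "real \<Rightarrow> real" where "\<psi> y = max 0 (min 1 (if u = u1 then y else 1 - y))" for y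
  define \<tau> where "\<tau> x = \<psi> (\<phi> x)" for x
  have \<phi>[measurable]: "\<phi> \<in> borel_measurable MX" and \<psi>[measurable]: "\<psi> \<in> borel_measurable borel"
    unfolding \<phi>_def \<psi>_def by measurable
  have \<tau>: "\<tau> \<in> borel_measurable MX"
    unfolding \<tau>_def by measurable
  have \<tau>_bound: "\<bar>\<tau> x\<bar> \<le> 1" for x
    by (simp add: \<tau>_def \<psi>_def)
  have ratio: "AE \<omega> in M. \<tau> (X \<omega>) * (e u1 (X \<omega>) + e u2 (X \<omega>)) = e u1 (X \<omega>)"
    using pos score_nonneg[of u1] score_nonneg[of u2]
  proof eventually_elim
    case (elim \<omega>)
    then show ?case
      using u u12 clamped_ratio_mult_eq[OF elim] by (auto simp: \<tau>_def \<psi>_def \<phi>_def)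
  qed
  have A: "A \<in> sets M"
    unfolding A_def by (rule sets_selected_event)
  interpret P: prob_space ?P
    using A A_pos by (intro prob_space_uniform_measure) (auto simp: emeasure_eq_measure)
  have XP: "X \<in> measurable ?P MX" and UP: "(\<lambda>\<omega>. (S1 \<omega>, S0 \<omega>)) \<in> measurable ?P (count_space UNIV)"
    by (simp_all add: measurable_cong_sets[OF sets_uniform_measure refl])
  have two_valued: "AE \<omega> in ?P. (S1 \<omega>, S0 \<omega>) = u1 \<or> (S1 \<omega>, S0 \<omega>) = u2"
    by (rule AE_uniform_measureI[OF A]) (auto simp: A_def)
  have "cond_indep ?P (vimage_algebra (space ?P) (\<lambda>\<omega>. \<phi> (X \<omega>)) borel) X MX
      (\<lambda>\<omega>. (S1 \<omega>, S0 \<omega>)) (count_space UNIV)"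
    using real_cond_exp_stratum_uniform_measure[OF \<tau> \<tau>_bound ratio u12 A_def A_pos]
    by (intro P.cond_indep_two_valued[OF XP \<phi> \<psi> UP two_valued]) (simp add: \<tau>_def)
  then show ?thesis
    by (simp add: \<phi>_def)
qed

end

theorem lemmaA6:
  fixes M :: "'a measure"
    and Z S1 S0 :: "'a \<Rightarrow> bool"
    and X :: "'a \<Rightarrow> real ^ 'n"
    and e :: "bool \<times> bool \<Rightarrow> real ^ 'n \<Rightarrow> real"
  defines "U \<equiv> (\<lambda>\<omega>. (S1 \<omega>, S0 \<omega>))"
    and "S \<equiv> (\<lambda>\<omega>. if Z \<omega> then S1 \<omega> else S0 \<omega>)"
  assumes "prob_space M"
    and "Z \<in> measurable M (count_space UNIV)"
    and "S1 \<in> measurable M (count_space UNIV)"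
    and "S0 \<in> measurable M (count_space UNIV)"
    and "X \<in> borel_measurable M"
    and "prob_space.indep_set M
           (sets (vimage_algebra (space M) Z (count_space UNIV)))
           (sets (vimage_algebra (space M) (\<lambda>\<omega>. (S1 \<omega>, S0 \<omega>, X \<omega>))
              (count_space UNIV \<Otimes>\<^sub>M count_space UNIV \<Otimes>\<^sub>M borel)))"
    and monotonicity: "AE \<omega> in M. S0 \<omega> \<longrightarrow> S1 \<omega>"
    and "\<And>u. e u \<in> borel_measurable borel"
    and "\<And>u. AE \<omega> in M. e u (X \<omega>) =
           real_cond_exp M (vimage_algebra (space M) X borel) (indicator {\<omega>\<in>space M. U \<omega> = u}) \<omega>"
    and "measure M {\<omega>\<in>space M. Z \<omega> \<and> S \<omega>} > 0"
    and "measure M {\<omega>\<in>space M. \<not> Z \<omega> \<and> \<not> S \<omega>} > 0"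
    and "AE \<omega> in M. e ssbar (X \<omega>) + e ss (X \<omega>) > 0"
    and "AE \<omega> in M. e ssbar (X \<omega>) + e sbarsbar (X \<omega>) > 0"
  shows "(\<forall>u\<in>{ssbar, ss}.
            cond_indep (uniform_measure M {\<omega>\<in>space M. Z \<omega> \<and> S \<omega>})
              (vimage_algebra (space M) (\<lambda>\<omega>. e1 e u (X \<omega>)) borel)
              X borel U (count_space UNIV))
       \<and> (\<forall>u\<in>{ssbar, sbarsbar}.
            cond_indep (uniform_measure M {\<omega>\<in>space M. \<not> Z \<omega> \<and> \<not> S \<omega>})
              (vimage_algebra (space M) (\<lambda>\<omega>. e0 e u (X \<omega>)) borel)
              X borel U (count_space UNIV))"
proof -
  have "principal_strata M Z S1 S0 X borel e"
    using assms(3-8,10,11) unfolding principal_strata_def principal_strata_axioms_def U_def by blast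
  then interpret principal_strata M Z S1 S0 X borel e .
  have treated: "{\<omega>\<in>space M. Z \<omega> \<and> S \<omega>} = {\<omega>\<in>space M. Z \<omega> \<in> {True} \<and> (S1 \<omega>, S0 \<omega>) \<in> {ssbar, ss}}"
    by (auto simp: S_def)
  have control: "{\<omega>\<in>space M. \<not> Z \<omega> \<and> \<not> S \<omega>}
      = {\<omega>\<in>space M. Z \<omega> \<in> {False} \<and> (S1 \<omega>, S0 \<omega>) \<in> {ssbar, sbarsbar}}"
    by (auto simp: S_def)
  show ?thesis
    unfolding e1_def e0_def U_def
    using cond_indep_normalized_principal_score[OF treated assms(12,14)]
      cond_indep_normalized_principal_score[OF control assms(13,15)]
    by auto
qed

end
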